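(* Let $G$ and $H$ be finite simple graphs, let $U\subseteq V_G$, and let $k$ be an integer. Then $$\gamma^d_k(G(U)\sqcap H)\leq \gamma^d_{k}(G)\,n(H),$$ where $n(H)=|V_H|$ and $\infty\cdot n(H)=\infty$.
   Context: All graphs are finite and simple. For a graph $G=(V_G,E_G)$, $S\subseteq V_G$ and $v\in V_G$, let $N_S(v)=\{u\in S: uv\in E_G\}$ and $\bar S=V_G\setminus S$. A set $D\subseteq V_G$ is dominating if every vertex outside $D$ has a neighbor in $D$. For an integer $k$, a nonempty set $S\subseteq V_G$ is a global defensive $k$-alliance (GD$k$-A) in $G$ if $S$ is dominating and $|N_S(v)|\ge |N_{\bar S}(v)|+k$ for every $v\in S$. The number $\gamma^d_k(G)$ is the minimum cardinality of a GD$k$-A in $G$, and $\gamma^d_k(G)=\infty$ if $G$ has none. For $U\subseteq V_G$, the generalized hierarchical product $G(U)\sqcap H$ has vertex set $V_G\times V_H$, with $(g,h)$ and $(g',h')$ adjacent iff either $g=g'\in U$ and $hh'\in E_H$, or $gg'\in E_G$ and $h=h'$. *)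

theory Defs
  imports Main "HOL-Library.Extended_Nat"
begin

definition simple_graph :: "'a set \<Rightarrow> ('a \<times> 'a) set \<Rightarrow> bool" where
  "simple_graph V E \<longleftrightarrow> finite V \<and> V \<noteq> {} \<and> E \<subseteq> V \<times> V \<and> sym E \<and> irrefl E"

definition nbhd :: "('a \<times> 'a) set \<Rightarrow> 'a set \<Rightarrow> 'a \<Rightarrow> 'a set" where
  "nbhd E S v = {u \<in> S. (u, v) \<in> E}"

definition dominating :: "'a set \<Rightarrow> ('a \<times> 'a) set \<Rightarrow> 'a set \<Rightarrow> bool" where
  "dominating V E D \<longleftrightarrow> D \<subseteq> V \<and> (\<forall>v \<in> V - D. \<exists>u \<in> D. (v, u) \<in> E)"

definition gdka :: "'a set \<Rightarrow> ('a \<times> 'a) set \<Rightarrow> int \<Rightarrow> 'a set \<Rightarrow> bool" where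
  "gdka V E k S \<longleftrightarrow> S \<noteq> {} \<and> dominating V E S \<and>
     (\<forall>v \<in> S. int (card (nbhd E S v)) \<ge> int (card (nbhd E (V - S) v)) + k)"

text \<open>Global defensive k-alliance number; Inf of the empty set of enat is \<infinity>.\<close>
definition gamma_d :: "'a set \<Rightarrow> ('a \<times> 'a) set \<Rightarrow> int \<Rightarrow> enat" where
  "gamma_d V E k = Inf {enat (card S) | S. gdka V E k S}"

text \<open>Generalized hierarchical product G(U) \<sqinter> H: vertex set V_G \<times> V_H, edges below.\<close>
definition hprod_edges ::
  "'a set \<Rightarrow> ('a \<times> 'a) set \<Rightarrow> 'a set \<Rightarrow> 'b set \<Rightarrow> ('b \<times> 'b) set \<Rightarrow> (('a \<times> 'b) \<times> ('a \<times> 'b)) set" where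
  "hprod_edges VG EG U VH EH =
     {((g, h), (g', h')). g \<in> VG \<and> g' \<in> VG \<and> h \<in> VH \<and> h' \<in> VH \<and>
        ((g = g' \<and> g \<in> U \<and> (h, h') \<in> EH) \<or> ((g, g') \<in> EG \<and> h = h'))}"

end

theory Submission
  imports Defs
begin

text \<open>If S is a global defensive k-alliance of G, then S \<times> V_H is one of G(U) \<sqinter> H: the
  neighbours of (g, h) outside S \<times> V_H are exactly the (u, h) with u a neighbour of g outside S,
  since every edge leaving the fibre {g} \<times> V_H is a copy of an edge of G, while the neighbours
  of (g, h) inside S \<times> V_H include the copies of the neighbours of g inside S.\<close>

lemma gamma_d_le_card:
  assumes "gdka V E k S"
  shows "gamma_d V E k \<le> enat (card S)"
  unfolding gamma_d_def using assms by (auto intro!: Inf_lower)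

lemma gamma_d_attained:
  assumes "gamma_d V E k \<noteq> \<infinity>"
  obtains S where "gdka V E k S" and "gamma_d V E k = enat (card S)"
proof -
  let ?A = "{enat (card S) | S. gdka V E k S}"
  have "?A \<noteq> {}"
    using assms unfolding gamma_d_def by (metis Inf_empty top_enat_def)
  then have "Inf ?A \<in> ?A"
    unfolding Inf_enat_def by (auto intro: LeastI)
  then show thesis
    using that unfolding gamma_d_def by auto
qed

lemma dominating_hprod:
  assumes "dominating VG EG S"
  shows "dominating (VG \<times> VH) (hprod_edges VG EG U VH EH) (S \<times> VH)"
  using assms unfolding dominating_def hprod_edges_def by blast

lemma nbhd_hprod_outside:
  assumes "S \<subseteq> VG" and "g \<in> S" and "h \<in> VH"
  shows "nbhd (hprod_edges VG EG U VH EH) (VG \<times> VH - S \<times> VH) (g, h)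
           = (\<lambda>u. (u, h)) ` nbhd EG (VG - S) g"
  using assms unfolding nbhd_def hprod_edges_def by auto

lemma nbhd_hprod_inside:
  assumes "S \<subseteq> VG" and "g \<in> S" and "h \<in> VH"
  shows "(\<lambda>u. (u, h)) ` nbhd EG S g \<subseteq> nbhd (hprod_edges VG EG U VH EH) (S \<times> VH) (g, h)"
  using assms unfolding nbhd_def hprod_edges_def by auto

lemma card_nbhd_hprod_inside:
  assumes "finite S" and "finite VH" and "S \<subseteq> VG" and "g \<in> S" and "h \<in> VH"
  shows "card (nbhd EG S g) \<le> card (nbhd (hprod_edges VG EG U VH EH) (S \<times> VH) (g, h))"
proof -
  have "finite (nbhd (hprod_edges VG EG U VH EH) (S \<times> VH) (g, h))"
    using assms(1,2) by (auto simp: nbhd_def)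
  then have "card ((\<lambda>u. (u, h)) ` nbhd EG S g)
               \<le> card (nbhd (hprod_edges VG EG U VH EH) (S \<times> VH) (g, h))"
    using nbhd_hprod_inside[OF assms(3-5)] by (rule card_mono)
  moreover have "card ((\<lambda>u. (u, h)) ` nbhd EG S g) = card (nbhd EG S g)"
    by (rule card_image) (auto simp: inj_on_def)
  ultimately show ?thesis by simp
qed

lemma card_nbhd_hprod_outside:
  assumes "S \<subseteq> VG" and "g \<in> S" and "h \<in> VH"
  shows "card (nbhd (hprod_edges VG EG U VH EH) (VG \<times> VH - S \<times> VH) (g, h))
           = card (nbhd EG (VG - S) g)"
  unfolding nbhd_hprod_outside[OF assms] by (rule card_image) (auto simp: inj_on_def)

lemma gdka_hprod:
  assumes "gdka VG EG k S" and "finite VG" and "finite VH" and "VH \<noteq> {}"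
  shows "gdka (VG \<times> VH) (hprod_edges VG EG U VH EH) k (S \<times> VH)"
proof -
  have S: "S \<noteq> {}" "dominating VG EG S" "S \<subseteq> VG"
    and alliance: "\<And>g. g \<in> S \<Longrightarrow> int (card (nbhd EG S g)) \<ge> int (card (nbhd EG (VG - S) g)) + k"
    using assms(1) unfolding gdka_def dominating_def by auto
  have "finite S"
    using S(3) assms(2) by (rule finite_subset)
  have "int (card (nbhd (hprod_edges VG EG U VH EH) (S \<times> VH) (g, h)))
          \<ge> int (card (nbhd (hprod_edges VG EG U VH EH) (VG \<times> VH - S \<times> VH) (g, h))) + k"
    if "g \<in> S" and "h \<in> VH" for g h
    using alliance[OF \<open>g \<in> S\<close>] card_nbhd_hprod_outside[OF S(3) that, of EG U EH]
      card_nbhd_hprod_inside[OF \<open>finite S\<close> assms(3) S(3) that, of EG U EH]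
    by linarith
  then show ?thesis
    unfolding gdka_def using S(1,2) assms(4) by (auto intro: dominating_hprod)
qed

theorem mainTheorem1:
  fixes VG :: "'a set" and EG :: "('a \<times> 'a) set" and U :: "'a set"
    and VH :: "'b set" and EH :: "('b \<times> 'b) set" and k :: int
  assumes "simple_graph VG EG" and "simple_graph VH EH" and "U \<subseteq> VG"
  shows "gamma_d (VG \<times> VH) (hprod_edges VG EG U VH EH) k
           \<le> (if gamma_d VG EG k = \<infinity> then \<infinity> else gamma_d VG EG k * enat (card VH))"
proof (cases "gamma_d VG EG k = \<infinity>")
  case True
  then show ?thesis by simp
next
  case False
  then obtain S where S: "gdka VG EG k S" and gamma_S: "gamma_d VG EG k = enat (card S)"
    by (rule gamma_d_attained)
  have "gdka (VG \<times> VH) (hprod_edges VG EG U VH EH) k (S \<times> VH)"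
    using gdka_hprod[OF S] assms unfolding simple_graph_def by blast
  then have "gamma_d (VG \<times> VH) (hprod_edges VG EG U VH EH) k \<le> enat (card (S \<times> VH))"
    by (rule gamma_d_le_card)
  also have "\<dots> = gamma_d VG EG k * enat (card VH)"
    using gamma_S by (simp add: card_cartesian_product)
  finally show ?thesis
    using False by simp
qed

end
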